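(* Let $\mathbb{K}$ be a field, $m\in\mathbb{Z}_{>0}$, $n=m$, and let $\mathbf{U}_1=\mathbf{U}_1(\mathfrak{gl}_m)$. Let $V$ be the $n$-dimensional vector representation of $\mathbf{U}_1$, $V^*$ its dual, and for $r,s\in\mathbb{Z}_{\geq 0}$ set $T_n^{r,s}=V^{\otimes r}\otimes (V^* )^{\otimes s}$. If $T_n^{r,s}$ is a non-semisimple $\mathbf{U}_1$-module, then $T_n^{r+1,s+1}$ is a non-semisimple $\mathbf{U}_1$-module.
   Context: $\mathbf{U}_1(\mathfrak{gl}_m)$ is the (Lusztig) quantized enveloping algebra of $\mathfrak{gl}_m$ specialized at $q=1$ over $\mathbb{K}$ (for any characteristic of $\mathbb{K}$); modules are finite-dimensional of type $1$, and tensor products carry the usual Hopf algebra action. *)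

theory Defs
  imports Main
begin

text \<open>Concrete model of the mixed tensor space T^{r,s} = V^{\<otimes> r} \<otimes> (V^*)^{\<otimes> s}
  as a module over Lusztig's divided-power algebra U_1(gl_m) (specialised at q = 1, type 1).
  Basis vectors are words w of length r+s over {0..<m}: positions p < r are V-factors
  (basis e_(w!p)), positions p \<ge> r are V^*-factors (dual basis e^*_(w!p)).
  Generators: E_i^(k), F_i^(k) (simple roots, Suc i < m), K_j^{\<plusminus>1} (acting as 1 on type 1
  modules at q=1) and the Cartan binomials [K_j;0,t], acting on weight \<lambda> by (\<lambda>_j choose t).\<close>

definition words :: "nat \<Rightarrow> nat \<Rightarrow> nat \<Rightarrow> nat list set" where
  "words m r s = {w. length w = r + s \<and> set w \<subseteq> {..<m}}"

text \<open>Action of E_i (e = True) resp. F_i (e = False) on a single tensor factor at position p: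
  on V: E_i e_(i+1) = e_i, F_i e_i = e_(i+1); on V^* (via the antipode at q=1):
  E_i e^*_i = - e^*_(i+1), F_i e^*_(i+1) = - e^*_i.  None means the result is 0.\<close>
definition step :: "nat \<Rightarrow> bool \<Rightarrow> nat \<Rightarrow> nat \<Rightarrow> nat \<Rightarrow> (nat \<times> int) option" where
  "step r e i p l =
     (if p < r then
        (if e then (if l = Suc i then Some (i, 1) else None)
              else (if l = i then Some (Suc i, 1) else None))
      else
        (if e then (if l = i then Some (Suc i, -1) else None)
              else (if l = Suc i then Some (i, -1) else None)))"

definition applies :: "nat \<Rightarrow> bool \<Rightarrow> nat \<Rightarrow> nat set \<Rightarrow> nat list \<Rightarrow> bool" where
  "applies r e i S w = (\<forall>p\<in>S. step r e i p (w ! p) \<noteq> None)"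

definition img :: "nat \<Rightarrow> bool \<Rightarrow> nat \<Rightarrow> nat set \<Rightarrow> nat list \<Rightarrow> nat list" where
  "img r e i S w =
     map (\<lambda>p. if p \<in> S then fst (the (step r e i p (w ! p))) else w ! p) [0..<length w]"

definition scal :: "nat \<Rightarrow> bool \<Rightarrow> nat \<Rightarrow> nat set \<Rightarrow> nat list \<Rightarrow> int" where
  "scal r e i S w = (\<Prod>p\<in>S. snd (the (step r e i p (w ! p))))"

text \<open>Since E_i^(a) = F_i^(a) = 0 on V and V^* for a \<ge> 2, the iterated coproduct
  \<Delta>(E_i^(k)) = \<Sum>_(a+b=k) E_i^(a) \<otimes> E_i^(b) (at q = 1, K_i acting by 1) gives a sum over
  k-element sets of tensor positions.\<close>
definition dp_coeff :: "nat \<Rightarrow> bool \<Rightarrow> nat \<Rightarrow> nat \<Rightarrow> nat list \<Rightarrow> nat list \<Rightarrow> int" where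
  "dp_coeff r e i k w w' =
     (\<Sum>S\<in>{S. S \<subseteq> {..<length w} \<and> card S = k}.
        if applies r e i S w \<and> img r e i S w = w' then scal r e i S w else 0)"

definition dp_act :: "nat \<Rightarrow> nat \<Rightarrow> nat \<Rightarrow> bool \<Rightarrow> nat \<Rightarrow> nat \<Rightarrow>
    (nat list \<Rightarrow> 'k::field) \<Rightarrow> nat list \<Rightarrow> 'k" where
  "dp_act m r s e i k v = (\<lambda>w'. \<Sum>w\<in>words m r s. v w * of_int (dp_coeff r e i k w w'))"

definition wt :: "nat \<Rightarrow> nat list \<Rightarrow> nat \<Rightarrow> int" where
  "wt r w j = int (length (filter (\<lambda>x. x = j) (take r w)))
            - int (length (filter (\<lambda>x. x = j) (drop r w)))"

text \<open>Integer binomial coefficient (\<lambda> choose t) for \<lambda> \<in> \<int>, using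
  (\<lambda> choose t) = (-1)^t ((t - \<lambda> - 1) choose t) for \<lambda> < 0.\<close>
definition int_binom :: "int \<Rightarrow> nat \<Rightarrow> int" where
  "int_binom l t = (if 0 \<le> l then int (nat l choose t)
                    else (-1) ^ t * int (nat (int t - l - 1) choose t))"

definition cartan_act :: "nat \<Rightarrow> nat \<Rightarrow> nat \<Rightarrow> (nat list \<Rightarrow> 'k::field) \<Rightarrow> nat list \<Rightarrow> 'k" where
  "cartan_act r j t v = (\<lambda>w. of_int (int_binom (wt r w j) t) * v w)"

definition tcarrier :: "'k::field itself \<Rightarrow> nat \<Rightarrow> nat \<Rightarrow> nat \<Rightarrow> (nat list \<Rightarrow> 'k) set" where
  "tcarrier _ m r s = {v. \<forall>w. w \<notin> words m r s \<longrightarrow> v w = 0}"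

definition is_submodule :: "nat \<Rightarrow> nat \<Rightarrow> nat \<Rightarrow> (nat list \<Rightarrow> 'k::field) set \<Rightarrow> bool" where
  "is_submodule m r s W \<longleftrightarrow>
     W \<subseteq> tcarrier TYPE('k) m r s \<and> (\<lambda>w. 0) \<in> W \<and>
     (\<forall>x\<in>W. \<forall>y\<in>W. (\<lambda>w. x w + y w) \<in> W) \<and>
     (\<forall>c x. x \<in> W \<longrightarrow> (\<lambda>w. c * x w) \<in> W) \<and>
     (\<forall>e i k x. Suc i < m \<longrightarrow> x \<in> W \<longrightarrow> dp_act m r s e i k x \<in> W) \<and>
     (\<forall>j t x. j < m \<longrightarrow> x \<in> W \<longrightarrow> cartan_act r j t x \<in> W)"

definition semisimple_T :: "'k::field itself \<Rightarrow> nat \<Rightarrow> nat \<Rightarrow> nat \<Rightarrow> bool" where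
  "semisimple_T _ m r s \<longleftrightarrow>
     (\<forall>W :: (nat list \<Rightarrow> 'k) set. is_submodule m r s W \<longrightarrow>
        (\<exists>W'. is_submodule m r s W' \<and> W \<inter> W' = {\<lambda>w. 0} \<and>
              (\<forall>v\<in>tcarrier TYPE('k) m r s. \<exists>a\<in>W. \<exists>b\<in>W'. v = (\<lambda>w. a w + b w))))"

end

theory Submission
  imports Defs
begin

text \<open>The vector v \<otimes> \<Sum>_j e_j \<otimes> e_j^*, with the gl_m-invariant \<Sum>_j e_j \<otimes> e_j^* inserted between
  the V- and the V^*-factors, defines an injective module map T^{r,s} \<rightarrow> T^{r+1,s+1}; on the
  combinatorial model this amounts to summing matrix coefficients of E_i^(k), F_i^(k) over the
  inserted letter j, where the two ways of moving the inserted pair cancel. Semisimplicity passes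
  to submodules: a complement of the image of a submodule W pulls back to a complement of W.\<close>

section \<open>Matrix coefficients of divided powers\<close>

definition factor_step :: "bool \<Rightarrow> bool \<Rightarrow> nat \<Rightarrow> nat \<Rightarrow> (nat \<times> int) option" where
  "factor_step b e i l =
     (if b then
        (if e then (if l = Suc i then Some (i, 1) else None)
              else (if l = i then Some (Suc i, 1) else None))
      else
        (if e then (if l = i then Some (Suc i, -1) else None)
              else (if l = Suc i then Some (i, -1) else None)))"

lemma step_eq_factor_step: "step r e i p l = factor_step (p < r) e i l"
  by (simp add: step_def factor_step_def)

lemma factor_step_changes_letter: "factor_step b e i l = Some (x, c) \<Longrightarrow> x \<noteq> l"
  by (auto simp: factor_step_def split: if_splits)

lemma factor_step_target: "factor_step b e i l = Some (x, c) \<Longrightarrow> x = i \<or> x = Suc i"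
  by (auto simp: factor_step_def split: if_splits)

text \<open>Only the set of positions where w and w' differ can contribute to dp_coeff r e i k w w',
  so the coefficient is a product of local factors, one per site (b, w!p, w'!p) with b telling
  whether position p is a V-factor: a site either keeps its letter (count 0, sign 1) or is moved
  by a single generator (count 1).\<close>
definition site_move :: "bool \<Rightarrow> nat \<Rightarrow> bool \<times> nat \<times> nat \<Rightarrow> (nat \<times> int) option" where
  "site_move e i = (\<lambda>(b, a, a').
     if a = a' then Some (0, 1)
     else (case factor_step b e i a of
             None \<Rightarrow> None
           | Some (x, c) \<Rightarrow> if x = a' then Some (1, c) else None))"

definition moves_ok :: "bool \<Rightarrow> nat \<Rightarrow> (bool \<times> nat \<times> nat) list \<Rightarrow> bool" where
  "moves_ok e i ts \<longleftrightarrow> (\<forall>t\<in>set ts. site_move e i t \<noteq> None)"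

definition moves_count :: "bool \<Rightarrow> nat \<Rightarrow> (bool \<times> nat \<times> nat) list \<Rightarrow> nat" where
  "moves_count e i ts = (\<Sum>t\<leftarrow>ts. fst (the (site_move e i t)))"

definition moves_sign :: "bool \<Rightarrow> nat \<Rightarrow> (bool \<times> nat \<times> nat) list \<Rightarrow> int" where
  "moves_sign e i ts = (\<Prod>t\<leftarrow>ts. snd (the (site_move e i t)))"

definition sites :: "nat \<Rightarrow> nat list \<Rightarrow> nat list \<Rightarrow> (bool \<times> nat \<times> nat) list" where
  "sites r w w' = map (\<lambda>p. (p < r, w ! p, w' ! p)) [0..<length w]"

definition changed :: "nat list \<Rightarrow> nat list \<Rightarrow> nat set" where
  "changed w w' = {p. p < length w \<and> w ! p \<noteq> w' ! p}"

lemma changed_subset: "changed w w' \<subseteq> {..<length w}"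
  by (auto simp: changed_def)

lemma site_move_ne_None_iff:
  "site_move e i (b, a, a') \<noteq> None \<longleftrightarrow> a = a' \<or> (\<exists>c. factor_step b e i a = Some (a', c))"
  by (auto simp: site_move_def split: option.splits)

lemma moves_ok_append [simp]: "moves_ok e i (xs @ ys) \<longleftrightarrow> moves_ok e i xs \<and> moves_ok e i ys"
  by (auto simp: moves_ok_def)

lemma moves_count_append [simp]: "moves_count e i (xs @ ys) = moves_count e i xs + moves_count e i ys"
  by (simp add: moves_count_def)

lemma moves_sign_append [simp]: "moves_sign e i (xs @ ys) = moves_sign e i xs * moves_sign e i ys"
  by (simp add: moves_sign_def)

lemma dp_coeff_length_mismatch: "length w' \<noteq> length w \<Longrightarrow> dp_coeff r e i k w w' = 0"
  unfolding dp_coeff_def img_def by (intro sum.neutral) auto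

lemma moves_ok_sites_iff:
  assumes "length w' = length w"
  shows "moves_ok e i (sites r w w') \<longleftrightarrow>
    (\<forall>p\<in>changed w w'. \<exists>c. factor_step (p < r) e i (w ! p) = Some (w' ! p, c))"
proof -
  have "moves_ok e i (sites r w w') \<longleftrightarrow> (\<forall>p<length w. site_move e i (p < r, w ! p, w' ! p) \<noteq> None)"
    unfolding moves_ok_def sites_def by (auto simp del: not_None_eq)
  then show ?thesis
    unfolding site_move_ne_None_iff changed_def by blast
qed

lemma applies_img_iff:
  assumes len: "length w' = length w" and S: "S \<subseteq> {..<length w}"
  shows "applies r e i S w \<and> img r e i S w = w' \<longleftrightarrow> S = changed w w' \<and> moves_ok e i (sites r w w')"
proof
  assume h: "applies r e i S w \<and> img r e i S w = w'"
  have w': "w' ! p = (if p \<in> S then fst (the (factor_step (p < r) e i (w ! p))) else w ! p)"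
    if "p < length w" for p
    using h that by (auto simp: img_def step_eq_factor_step)
  have moved: "\<exists>c. factor_step (p < r) e i (w ! p) = Some (w' ! p, c)" if p: "p \<in> S" for p
  proof -
    obtain x c where "factor_step (p < r) e i (w ! p) = Some (x, c)"
      using h p by (fastforce simp: applies_def step_eq_factor_step)
    then show ?thesis using w' p S by auto
  qed
  have "S = changed w w'"
  proof
    show "S \<subseteq> changed w w'"
      using S moved factor_step_changes_letter by (fastforce simp: changed_def)
    show "changed w w' \<subseteq> S"
      using w' by (auto simp: changed_def split: if_splits)
  qed
  moreover have "moves_ok e i (sites r w w')"
    using moved calculation moves_ok_sites_iff[OF len] by blast
  ultimately show "S = changed w w' \<and> moves_ok e i (sites r w w')" ..
next
  assume h: "S = changed w w' \<and> moves_ok e i (sites r w w')"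
  then have moved: "\<forall>p\<in>S. \<exists>c. factor_step (p < r) e i (w ! p) = Some (w' ! p, c)"
    using moves_ok_sites_iff[OF len] by blast
  then have "applies r e i S w" by (auto simp: applies_def step_eq_factor_step)
  moreover have "img r e i S w = w'"
    using len h moved by (intro nth_equalityI) (auto simp: img_def step_eq_factor_step changed_def)
  ultimately show "applies r e i S w \<and> img r e i S w = w'" ..
qed

lemma moves_count_sites:
  assumes "length w' = length w" and "moves_ok e i (sites r w w')"
  shows "moves_count e i (sites r w w') = card (changed w w')"
proof -
  have moved: "\<forall>p\<in>changed w w'. \<exists>c. factor_step (p < r) e i (w ! p) = Some (w' ! p, c)"
    using assms moves_ok_sites_iff by blast
  have "moves_count e i (sites r w w') = (\<Sum>p<length w. fst (the (site_move e i (p < r, w ! p, w' ! p))))"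
    by (simp add: moves_count_def sites_def sum.distinct_set_conv_list[symmetric] lessThan_atLeast0 o_def)
  also have "\<dots> = (\<Sum>p<length w. if p \<in> changed w w' then 1 else 0)"
    using moved by (intro sum.cong refl) (auto simp: site_move_def changed_def)
  also have "\<dots> = card (changed w w')"
    using changed_subset by (simp add: sum.If_cases Int_absorb1)
  finally show ?thesis .
qed

lemma moves_sign_sites:
  assumes "length w' = length w" and "moves_ok e i (sites r w w')"
  shows "moves_sign e i (sites r w w') = scal r e i (changed w w') w"
proof -
  have moved: "\<forall>p\<in>changed w w'. \<exists>c. factor_step (p < r) e i (w ! p) = Some (w' ! p, c)"
    using assms moves_ok_sites_iff by blast
  have "moves_sign e i (sites r w w') = (\<Prod>p<length w. snd (the (site_move e i (p < r, w ! p, w' ! p))))"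
    by (simp add: moves_sign_def sites_def prod.distinct_set_conv_list[symmetric] lessThan_atLeast0 o_def)
  also have "\<dots> = (\<Prod>p<length w. if p \<in> changed w w' then snd (the (step r e i p (w ! p))) else 1)"
    using moved by (intro prod.cong refl)
      (auto simp: site_move_def changed_def step_eq_factor_step)
  also have "\<dots> = scal r e i (changed w w') w"
    using changed_subset by (simp add: prod.If_cases Int_absorb1 scal_def)
  finally show ?thesis .
qed

lemma dp_coeff_eq_sites:
  assumes len: "length w' = length w"
  shows "dp_coeff r e i k w w' =
     (if moves_ok e i (sites r w w') \<and> moves_count e i (sites r w w') = k
      then moves_sign e i (sites r w w') else 0)"
proof -
  let ?D = "changed w w'" and ?ok = "moves_ok e i (sites r w w')"
  have fin: "finite {S. S \<subseteq> {..<length w} \<and> card S = k}"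
    by (rule finite_subset[of _ "Pow {..<length w}"]) auto
  have "dp_coeff r e i k w w' = (\<Sum>S\<in>{S. S \<subseteq> {..<length w} \<and> card S = k}.
      if S = ?D then (if ?ok then scal r e i ?D w else 0) else 0)"
    unfolding dp_coeff_def by (intro sum.cong refl) (auto simp: applies_img_iff[OF len])
  also have "\<dots> = (if card ?D = k \<and> ?ok then scal r e i ?D w else 0)"
    using changed_subset by (simp add: sum.delta'[OF fin])
  finally show ?thesis
    using moves_count_sites[OF len] moves_sign_sites[OF len] by auto
qed

lemma dp_coeff_outside_words:
  assumes w: "w \<in> words m r s" and w': "w' \<notin> words m r s" and i: "Suc i < m"
  shows "dp_coeff r e i k w w' = 0"
proof (cases "length w' = length w")
  case len: True
  show ?thesis
  proof (rule ccontr)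
    assume "dp_coeff r e i k w w' \<noteq> 0"
    then have "moves_ok e i (sites r w w')"
      by (auto simp: dp_coeff_eq_sites[OF len] split: if_splits)
    then have "\<forall>p\<in>changed w w'. w' ! p = i \<or> w' ! p = Suc i"
      using moves_ok_sites_iff[OF len] factor_step_target by metis
    then have "set w' \<subseteq> {..<m}"
      using w i len by (fastforce simp: words_def changed_def in_set_conv_nth)
    then show False using w w' len by (simp add: words_def)
  qed
qed (simp add: dp_coeff_length_mismatch)

lemma dp_act_in_tcarrier:
  "Suc i < m \<Longrightarrow> dp_act m r s e i k v \<in> tcarrier TYPE('k::field) m r s"
  unfolding tcarrier_def dp_act_def by (auto intro!: sum.neutral simp: dp_coeff_outside_words)

lemma cartan_act_in_tcarrier:
  "v \<in> tcarrier TYPE('k::field) m r s \<Longrightarrow> cartan_act r j t v \<in> tcarrier TYPE('k) m r s"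
  unfolding tcarrier_def cartan_act_def by auto

section \<open>Semisimplicity descends along embeddings\<close>

locale tensor_embedding =
  fixes m r s r' s' :: nat
    and f :: "(nat list \<Rightarrow> 'k::field) \<Rightarrow> nat list \<Rightarrow> 'k"
  assumes maps_tcarrier: "v \<in> tcarrier TYPE('k) m r s \<Longrightarrow> f v \<in> tcarrier TYPE('k) m r' s'"
    and inj_on_tcarrier: "inj_on f (tcarrier TYPE('k) m r s)"
    and additive: "f (\<lambda>w. x w + y w) = (\<lambda>u. f x u + f y u)"
    and homogeneous: "f (\<lambda>w. c * x w) = (\<lambda>u. c * f x u)"
    and commute_dp_act: "\<lbrakk>Suc i < m; v \<in> tcarrier TYPE('k) m r s\<rbrakk> \<Longrightarrow>
      f (dp_act m r s e i k v) = dp_act m r' s' e i k (f v)"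
    and commute_cartan_act: "\<lbrakk>j < m; v \<in> tcarrier TYPE('k) m r s\<rbrakk> \<Longrightarrow>
      f (cartan_act r j t v) = cartan_act r' j t (f v)"
begin

lemma map_zero: "f (\<lambda>w. 0) = (\<lambda>u. 0)"
  using homogeneous[of 0 "\<lambda>w. 0"] by simp

lemma map_diff: "f (\<lambda>w. x w - y w) = (\<lambda>u. f x u - f y u)"
  using additive[of x "\<lambda>w. (-1) * y w"] homogeneous[of "-1" y] by simp

lemma submodule_image:
  assumes W: "is_submodule m r s W"
  shows "is_submodule m r' s' (f ` W)"
  unfolding is_submodule_def
proof (intro conjI allI impI ballI)
  have WT: "W \<subseteq> tcarrier TYPE('k) m r s" using W by (simp add: is_submodule_def)
  then show "f ` W \<subseteq> tcarrier TYPE('k) m r' s'" by (intro image_subsetI maps_tcarrier) blast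
  have "f (\<lambda>w. 0) \<in> f ` W" using W by (simp add: is_submodule_def)
  then show "(\<lambda>w. 0) \<in> f ` W" by (simp only: map_zero)
  show "(\<lambda>w. x w + y w) \<in> f ` W" if xW: "x \<in> f ` W" and yW: "y \<in> f ` W" for x y
  proof -
    obtain x' y' where "x' \<in> W" "y' \<in> W" and xy: "x = f x'" "y = f y'" using xW yW by blast
    then have "f (\<lambda>w. x' w + y' w) \<in> f ` W" using W by (simp add: is_submodule_def)
    then show ?thesis by (simp only: additive xy)
  qed
  show "(\<lambda>w. c * x w) \<in> f ` W" if xW: "x \<in> f ` W" for c x
  proof -
    obtain x' where "x' \<in> W" and x: "x = f x'" using xW by blast
    then have "f (\<lambda>w. c * x' w) \<in> f ` W" using W by (simp add: is_submodule_def)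
    then show ?thesis by (simp only: homogeneous x)
  qed
  show "dp_act m r' s' e i k x \<in> f ` W" if i: "Suc i < m" and xW: "x \<in> f ` W" for e i k x
  proof -
    obtain y where y: "y \<in> W" and x: "x = f y" using xW by blast
    then have "f (dp_act m r s e i k y) \<in> f ` W" using W i by (simp add: is_submodule_def)
    then show ?thesis using y WT by (simp add: commute_dp_act[OF i] x subset_iff)
  qed
  show "cartan_act r' j t x \<in> f ` W" if j: "j < m" and xW: "x \<in> f ` W" for j t x
  proof -
    obtain y where y: "y \<in> W" and x: "x = f y" using xW by blast
    then have "f (cartan_act r j t y) \<in> f ` W" using W j by (simp add: is_submodule_def)
    then show ?thesis using y WT by (simp add: commute_cartan_act[OF j] x subset_iff)
  qed
qed

lemma submodule_preimage:
  assumes "is_submodule m r' s' W'"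
  shows "is_submodule m r s {x \<in> tcarrier TYPE('k) m r s. f x \<in> W'}"
  using assms dp_act_in_tcarrier cartan_act_in_tcarrier
  by (auto simp: is_submodule_def map_zero additive homogeneous commute_dp_act commute_cartan_act)
    (simp_all add: tcarrier_def)

lemma semisimple_source:
  assumes "semisimple_T TYPE('k) m r' s'"
  shows "semisimple_T TYPE('k) m r s"
  unfolding semisimple_T_def
proof (intro allI impI)
  let ?T = "tcarrier TYPE('k) m r s"
  fix W :: "(nat list \<Rightarrow> 'k) set"
  assume W: "is_submodule m r s W"
  then have WT: "W \<subseteq> ?T" by (simp add: is_submodule_def)
  have "\<exists>W'. is_submodule m r' s' W' \<and> f ` W \<inter> W' = {\<lambda>w. 0} \<and>
      (\<forall>v\<in>tcarrier TYPE('k) m r' s'. \<exists>a\<in>f ` W. \<exists>b\<in>W'. v = (\<lambda>w. a w + b w))"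
    using assms submodule_image[OF W] unfolding semisimple_T_def by (elim allE impE)
  then obtain W' where W': "is_submodule m r' s' W'" and disjoint: "f ` W \<inter> W' = {\<lambda>w. 0}"
    and spanning: "\<forall>v\<in>tcarrier TYPE('k) m r' s'. \<exists>a\<in>f ` W. \<exists>b\<in>W'. v = (\<lambda>w. a w + b w)"
    by (elim exE conjE)
  define C where "C = {x \<in> ?T. f x \<in> W'}"
  have C: "is_submodule m r s C"
    unfolding C_def using W' by (rule submodule_preimage)
  have "W \<inter> C = {\<lambda>w. 0}"
  proof
    show "{\<lambda>w. 0} \<subseteq> W \<inter> C" using W C by (simp add: is_submodule_def)
    show "W \<inter> C \<subseteq> {\<lambda>w. 0}"
    proof
      fix x assume x: "x \<in> W \<inter> C"
      then have "f x \<in> f ` W \<inter> W'" by (simp add: C_def)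
      then have "f x = f (\<lambda>w. 0)" using disjoint by (simp add: map_zero)
      moreover have "(\<lambda>w. 0) \<in> ?T" by (simp add: tcarrier_def)
      moreover have "x \<in> ?T" using x by (simp add: C_def)
      ultimately show "x \<in> {\<lambda>w. 0}" using inj_on_tcarrier by (simp add: inj_on_eq_iff)
    qed
  qed
  moreover have "\<exists>a\<in>W. \<exists>b\<in>C. v = (\<lambda>w. a w + b w)" if v: "v \<in> ?T" for v
  proof -
    obtain a b where a: "a \<in> f ` W" and b: "b \<in> W'" and fv: "f v = (\<lambda>w. a w + b w)"
      using spanning maps_tcarrier[OF v] by blast
    then obtain x where x: "x \<in> W" and "a = f x" by blast
    then have "f (\<lambda>w. v w - x w) = b" using fv by (simp add: map_diff)
    moreover have "(\<lambda>w. v w - x w) \<in> ?T" using v x WT by (auto simp: tcarrier_def)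
    ultimately have "(\<lambda>w. v w - x w) \<in> C" using b by (simp add: C_def)
    with x show ?thesis by (intro bexI[of _ x] bexI[of _ "\<lambda>w. v w - x w"]) simp_all
  qed
  ultimately show "\<exists>W'. is_submodule m r s W' \<and> W \<inter> W' = {\<lambda>w. 0} \<and>
      (\<forall>v\<in>?T. \<exists>a\<in>W. \<exists>b\<in>W'. v = (\<lambda>w. a w + b w))"
    using C by blast
qed

end

section \<open>Inserting the invariant \<Sum>_j e_j \<otimes> e_j^*\<close>

definition insert_pair :: "nat \<Rightarrow> nat \<Rightarrow> nat list \<Rightarrow> nat list" where
  "insert_pair r j w = take r w @ [j, j] @ drop r w"

definition remove_pair :: "nat \<Rightarrow> nat list \<Rightarrow> nat list" where
  "remove_pair r u = take r u @ drop (Suc (Suc r)) u"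

lemma length_insert_pair: "r \<le> length w \<Longrightarrow> length (insert_pair r j w) = length w + 2"
  by (simp add: insert_pair_def)

lemma nth_insert_pair:
  "r \<le> length w \<Longrightarrow> insert_pair r j w ! r = j \<and> insert_pair r j w ! Suc r = j"
  by (simp add: insert_pair_def nth_append)

lemma remove_insert_pair: "r \<le> length w \<Longrightarrow> remove_pair r (insert_pair r j w) = w"
  by (simp add: insert_pair_def remove_pair_def)

lemma take_nth_nth_drop:
  assumes "Suc (Suc r) \<le> length u"
  shows "u = take r u @ [u ! r, u ! Suc r] @ drop (Suc (Suc r)) u"
  using assms by (simp add: Cons_nth_drop_Suc)

lemma insert_remove_pair:
  "\<lbrakk>Suc (Suc r) \<le> length u; u ! r = u ! Suc r\<rbrakk> \<Longrightarrow> insert_pair r (u ! r) (remove_pair r u) = u"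
  using take_nth_nth_drop[of r u] by (simp add: insert_pair_def remove_pair_def min_def)

lemma set_insert_pair: "set (insert_pair r j w) = insert j (set w)"
  unfolding insert_pair_def by (metis Un_insert_right append_take_drop_id insert_absorb2
      list.set(2) set_append set_empty sup_bot.right_neutral Un_insert_left Un_commute)

lemma inj_on_insert_pair: "inj_on (\<lambda>(j, w). insert_pair r j w) {(j, w). r \<le> length w}"
proof (rule inj_onI, clarsimp)
  fix j w j' w' assume "r \<le> length w" "r \<le> length w'" "insert_pair r j w = insert_pair r j' w'"
  then show "j = j' \<and> w = w'" by (metis nth_insert_pair remove_insert_pair)
qed

lemma insert_pair_in_words:
  "\<lbrakk>w \<in> words m r s; j < m\<rbrakk> \<Longrightarrow> insert_pair r j w \<in> words m (r + 1) (s + 1)"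
  by (auto simp: words_def length_insert_pair set_insert_pair)

lemma finite_words: "finite (words m r s)"
  unfolding words_def
  by (rule finite_subset[OF _ finite_lists_length_eq[of "{..<m}" "r + s"]]) auto

lemma sites_eq_zip:
  "length w' = length w \<Longrightarrow> sites r w w' = zip (map (\<lambda>p. p < r) [0..<length w]) (zip w w')"
  by (rule nth_equalityI) (auto simp: sites_def)

lemma map_less_upt_add: "map (\<lambda>p. p < r) [0..<r + s] = replicate r True @ replicate s False"
  by (rule nth_equalityI) (auto simp: nth_append)

lemma sites_insert_pair:
  assumes "length w = r + s" "length u = r + s + 2"
  shows "sites (Suc r) (insert_pair r j w) u =
     zip (replicate r True) (zip (take r w) (take r u)) @ [(True, j, u ! r), (False, j, u ! Suc r)]
     @ zip (replicate s False) (zip (drop r w) (drop (Suc (Suc r)) u))"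
proof -
  have len: "length (insert_pair r j w) = Suc r + Suc s"
    using assms by (simp add: length_insert_pair)
  have "sites (Suc r) (insert_pair r j w) u =
      zip (replicate (Suc r) True @ replicate (Suc s) False) (zip (insert_pair r j w) u)"
    using assms len by (simp only: sites_eq_zip map_less_upt_add)
  also have "replicate (Suc r) True @ replicate (Suc s) False
      = replicate r True @ [True, False] @ replicate s False"
    by (simp add: replicate_append_same[symmetric])
  also have "zip (insert_pair r j w) u = zip (take r w @ [j, j] @ drop r w)
      (take r u @ [u ! r, u ! Suc r] @ drop (Suc (Suc r)) u)"
    using take_nth_nth_drop[of r u] assms by (simp add: insert_pair_def)
  finally show ?thesis using assms by (simp add: zip_append)
qed

lemma sites_remove_pair:
  assumes "length w = r + s" "length u = r + s + 2"
  shows "sites r w (remove_pair r u) =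
     zip (replicate r True) (zip (take r w) (take r u))
     @ zip (replicate s False) (zip (drop r w) (drop (Suc (Suc r)) u))"
proof -
  have "length (remove_pair r u) = length w"
    using assms by (simp add: remove_pair_def)
  then have "sites r w (remove_pair r u) =
      zip (replicate r True @ replicate s False) (zip w (remove_pair r u))"
    using assms by (simp only: sites_eq_zip map_less_upt_add)
  also have "zip w (remove_pair r u) = zip (take r w @ drop r w) (take r u @ drop (Suc (Suc r)) u)"
    by (simp add: remove_pair_def)
  also have "\<dots> = zip (take r w) (take r u) @ zip (drop r w) (drop (Suc (Suc r)) u)"
    by (rule zip_append) (simp add: assms)
  finally show ?thesis using assms by (simp add: zip_append)
qed

text \<open>Invariance of \<Sum>_j e_j \<otimes> e_j^*: on the inserted pair, the terms in which E_i or F_i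
  moves the V-letter and those in which it moves the V^*-letter cancel.\<close>
lemma sum_moves_coev_pair:
  assumes "Suc i < m"
  shows "(\<Sum>j<m. if moves_ok e i [(True, j, a), (False, j, b)]
                   \<and> moves_count e i [(True, j, a), (False, j, b)] + N = k
                then moves_sign e i [(True, j, a), (False, j, b)] else 0)
       = (if a = b \<and> a < m \<and> N = k then 1 else 0)"
proof -
  define P where "P = (if e then a = i \<and> b = Suc i else a = Suc i \<and> b = i)"
  have summand: "(if moves_ok e i [(True, j, a), (False, j, b)]
                    \<and> moves_count e i [(True, j, a), (False, j, b)] + N = k
                  then moves_sign e i [(True, j, a), (False, j, b)] else 0) =
       (if a = b then (if j = a \<and> N = k then 1 else 0)
        else if P \<and> Suc N = k
        then (if j = (if e then Suc i else i) then 1 else 0) - (if j = (if e then i else Suc i) then 1 else 0)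
        else 0)" for j
    unfolding P_def moves_ok_def moves_count_def moves_sign_def
    by (cases e; cases "j = a"; cases "j = b"; cases "a = b"; simp add: site_move_def factor_step_def; auto)
  show ?thesis
  proof (cases "a = b")
    case True
    then show ?thesis unfolding summand by (cases "N = k") (simp_all add: sum.delta)
  next
    case False
    then show ?thesis using assms unfolding summand
      by (cases "P \<and> Suc N = k"; cases e) (auto simp add: sum_subtractf sum.delta)
  qed
qed

lemma sum_dp_coeff_insert_pair:
  assumes w: "length w = r + s" and i: "Suc i < m"
  shows "(\<Sum>j<m. dp_coeff (Suc r) e i k (insert_pair r j w) u) =
     (if length u = r + s + 2 \<and> u ! r = u ! Suc r \<and> u ! r < m
      then dp_coeff r e i k w (remove_pair r u) else 0)"
proof (cases "length u = r + s + 2")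
  case False
  then show ?thesis using w by (simp add: dp_coeff_length_mismatch length_insert_pair)
next
  case u: True
  define A where "A = zip (replicate r True) (zip (take r w) (take r u))"
  define B where "B = zip (replicate s False) (zip (drop r w) (drop (Suc (Suc r)) u))"
  define M where "M = (\<lambda>j::nat. [(True, j, u ! r), (False, j, u ! Suc r)])"
  have "(\<Sum>j<m. dp_coeff (Suc r) e i k (insert_pair r j w) u) =
     (\<Sum>j<m. (if moves_ok e i (M j) \<and> moves_count e i (M j) + (moves_count e i A + moves_count e i B) = k
              then moves_sign e i (M j) else 0)
        * (if moves_ok e i A \<and> moves_ok e i B then moves_sign e i A * moves_sign e i B else 0))"
  proof (intro sum.cong refl)
    fix j
    have "dp_coeff (Suc r) e i k (insert_pair r j w) u =
      (if moves_ok e i (A @ M j @ B) \<and> moves_count e i (A @ M j @ B) = k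
       then moves_sign e i (A @ M j @ B) else 0)"
      using dp_coeff_eq_sites[of u "insert_pair r j w"] sites_insert_pair[OF w u, of j] w u
      by (simp add: length_insert_pair A_def B_def M_def)
    then show "dp_coeff (Suc r) e i k (insert_pair r j w) u =
      (if moves_ok e i (M j) \<and> moves_count e i (M j) + (moves_count e i A + moves_count e i B) = k
       then moves_sign e i (M j) else 0)
        * (if moves_ok e i A \<and> moves_ok e i B then moves_sign e i A * moves_sign e i B else 0)"
      by (auto simp: algebra_simps)
  qed
  also have "\<dots> = (if u ! r = u ! Suc r \<and> u ! r < m \<and> moves_count e i A + moves_count e i B = k then 1 else 0)
       * (if moves_ok e i A \<and> moves_ok e i B then moves_sign e i A * moves_sign e i B else 0)"
    unfolding sum_distrib_right[symmetric] M_def by (simp only: sum_moves_coev_pair[OF i])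
  also have "\<dots> = (if u ! r = u ! Suc r \<and> u ! r < m then dp_coeff r e i k w (remove_pair r u) else 0)"
    using dp_coeff_eq_sites[of "remove_pair r u" w r e i k] sites_remove_pair[OF w u] w u
    by (auto simp: remove_pair_def A_def B_def)
  finally show ?thesis using u by simp
qed

text \<open>v \<mapsto> \<Sum>_j v \<otimes> e_j \<otimes> e_j^*, the inserted pair occupying positions r (the last V-factor)
  and r + 1 (the first V^*-factor).\<close>
definition insert_coev ::
    "nat \<Rightarrow> nat \<Rightarrow> nat \<Rightarrow> (nat list \<Rightarrow> 'k::field) \<Rightarrow> nat list \<Rightarrow> 'k" where
  "insert_coev m r s v u =
     (if length u = r + s + 2 \<and> u ! r = u ! Suc r \<and> u ! r < m then v (remove_pair r u) else 0)"

lemma insert_coev_insert_pair: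
  "\<lbrakk>length w = r + s; j < m\<rbrakk> \<Longrightarrow> insert_coev m r s v (insert_pair r j w) = v w"
  by (simp add: insert_coev_def length_insert_pair nth_insert_pair remove_insert_pair)

lemma insert_coev_eq_0:
  assumes "v \<in> tcarrier TYPE('k::field) m r s"
    and "\<And>j w. \<lbrakk>j < m; w \<in> words m r s\<rbrakk> \<Longrightarrow> u \<noteq> insert_pair r j w"
  shows "insert_coev m r s v u = 0"
proof (cases "length u = r + s + 2 \<and> u ! r = u ! Suc r \<and> u ! r < m")
  case True
  have "remove_pair r u \<notin> words m r s"
  proof
    assume "remove_pair r u \<in> words m r s"
    then have "u \<noteq> insert_pair r (u ! r) (remove_pair r u)" using True by (intro assms(2)) auto
    moreover have "u = insert_pair r (u ! r) (remove_pair r u)"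
      using True by (intro insert_remove_pair[symmetric]) auto
    ultimately show False by contradiction
  qed
  then show ?thesis using assms(1) by (simp add: insert_coev_def tcarrier_def)
qed (auto simp: insert_coev_def)

lemma insert_coev_in_tcarrier:
  assumes "v \<in> tcarrier TYPE('k::field) m r s"
  shows "insert_coev m r s v \<in> tcarrier TYPE('k) m (r + 1) (s + 1)"
  unfolding tcarrier_def
proof (intro CollectI allI impI insert_coev_eq_0[OF assms])
  show "u \<noteq> insert_pair r j w" if "u \<notin> words m (r + 1) (s + 1)" "j < m" "w \<in> words m r s" for u j w
    using that insert_pair_in_words by blast
qed

lemma sum_insert_coev:
  assumes v: "v \<in> tcarrier TYPE('k::field) m r s"
  shows "(\<Sum>u\<in>words m (r + 1) (s + 1). insert_coev m r s v u * g u) =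
    (\<Sum>w\<in>words m r s. v w * (\<Sum>j<m. g (insert_pair r j w)))"
proof -
  let ?ins = "\<lambda>(j, w). insert_pair r j w" and ?X = "{..<m} \<times> words m r s"
  have inj: "inj_on ?ins ?X"
    by (rule inj_on_subset[OF inj_on_insert_pair]) (auto simp: words_def)
  have sub: "?ins ` ?X \<subseteq> words m (r + 1) (s + 1)"
    using insert_pair_in_words by auto
  have zero: "insert_coev m r s v u * g u = 0" if u: "u \<notin> ?ins ` ?X" for u
  proof -
    have "u \<noteq> insert_pair r j w" if "j < m" "w \<in> words m r s" for j w
    proof -
      have "?ins (j, w) \<in> ?ins ` ?X" using that by (intro imageI) simp
      then show ?thesis using u by (auto simp only: case_prod_conv)
    qed
    then have "insert_coev m r s v u = 0" by (rule insert_coev_eq_0[OF v])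
    then show ?thesis by simp
  qed
  have "(\<Sum>u\<in>words m (r + 1) (s + 1). insert_coev m r s v u * g u) =
      (\<Sum>u\<in>?ins ` ?X. insert_coev m r s v u * g u)"
    by (rule sum.mono_neutral_right[OF finite_words sub]) (simp add: zero)
  also have "\<dots> = (\<Sum>p\<in>?X. insert_coev m r s v (?ins p) * g (?ins p))"
    by (rule sum.reindex[OF inj, unfolded o_def])
  also have "\<dots> = (\<Sum>j<m. \<Sum>w\<in>words m r s. insert_coev m r s v (insert_pair r j w) * g (insert_pair r j w))"
    by (simp add: sum.cartesian_product case_prod_beta)
  also have "\<dots> = (\<Sum>j<m. \<Sum>w\<in>words m r s. v w * g (insert_pair r j w))"
    by (intro sum.cong refl) (simp add: insert_coev_insert_pair words_def)
  also have "\<dots> = (\<Sum>w\<in>words m r s. v w * (\<Sum>j<m. g (insert_pair r j w)))"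
    by (simp add: sum.swap[of _ "{..<m}"] sum_distrib_left)
  finally show ?thesis .
qed

lemma insert_coev_dp_act:
  assumes i: "Suc i < m" and v: "v \<in> tcarrier TYPE('k::field) m r s"
  shows "insert_coev m r s (dp_act m r s e i k v) = dp_act m (r + 1) (s + 1) e i k (insert_coev m r s v)"
proof
  fix u
  let ?P = "length u = r + s + 2 \<and> u ! r = u ! Suc r \<and> u ! r < m"
  have "dp_act m (r + 1) (s + 1) e i k (insert_coev m r s v) u =
      (\<Sum>w\<in>words m r s. v w * of_int (\<Sum>j<m. dp_coeff (Suc r) e i k (insert_pair r j w) u))"
    unfolding dp_act_def sum_insert_coev[OF v] by (simp add: of_int_sum)
  also have "\<dots> = (\<Sum>w\<in>words m r s. v w * of_int (if ?P then dp_coeff r e i k w (remove_pair r u) else 0))"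
    by (intro sum.cong refl) (simp only: sum_dp_coeff_insert_pair[OF _ i] words_def mem_Collect_eq)
  also have "\<dots> = insert_coev m r s (dp_act m r s e i k v) u"
  proof (cases ?P)
    case True
    show ?thesis by (simp only: insert_coev_def dp_act_def if_P[OF True])
  next
    case False
    show ?thesis
      by (simp only: insert_coev_def if_not_P[OF False] of_int_0 mult_zero_right sum.neutral_const)
  qed
  finally show "insert_coev m r s (dp_act m r s e i k v) u =
      dp_act m (r + 1) (s + 1) e i k (insert_coev m r s v) u" ..
qed

lemma wt_remove_pair:
  assumes "Suc (Suc r) \<le> length u" and "u ! r = u ! Suc r"
  shows "wt (Suc r) u j = wt r (remove_pair r u) j"
proof -
  have "take (Suc r) u = take r u @ [u ! r]" "drop (Suc r) u = u ! Suc r # drop (Suc (Suc r)) u"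
    using assms(1) by (simp_all add: take_Suc_conv_app_nth Cons_nth_drop_Suc)
  then show ?thesis using assms by (simp add: wt_def remove_pair_def)
qed

lemma insert_coev_cartan_act:
  "insert_coev m r s (cartan_act r j t v) = cartan_act (r + 1) j t (insert_coev m r s v)"
proof
  fix u
  show "insert_coev m r s (cartan_act r j t v) u = cartan_act (r + 1) j t (insert_coev m r s v) u"
  proof (cases "length u = r + s + 2 \<and> u ! r = u ! Suc r \<and> u ! r < m")
    case True
    then have "wt (Suc r) u j = wt r (remove_pair r u) j"
      by (intro wt_remove_pair) auto
    with True show ?thesis by (simp add: insert_coev_def cartan_act_def)
  qed (auto simp: insert_coev_def cartan_act_def)
qed

lemma tensor_embedding_insert_coev:
  assumes "m > 0"
  shows "tensor_embedding m r s (r + 1) (s + 1) (insert_coev m r s :: (nat list \<Rightarrow> 'k::field) \<Rightarrow> _)"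
proof
  show "inj_on (insert_coev m r s) (tcarrier TYPE('k) m r s)"
  proof (rule inj_onI)
    fix x y :: "nat list \<Rightarrow> 'k"
    assume xy: "x \<in> tcarrier TYPE('k) m r s" "y \<in> tcarrier TYPE('k) m r s"
      and eq: "insert_coev m r s x = insert_coev m r s y"
    show "x = y"
    proof
      fix w
      show "x w = y w"
      proof (cases "w \<in> words m r s")
        case True
        then show ?thesis
          using fun_cong[OF eq, of "insert_pair r 0 w"] assms
          by (simp add: insert_coev_insert_pair words_def)
      qed (use xy in \<open>simp add: tcarrier_def\<close>)
    qed
  qed
  show "insert_coev m r s (\<lambda>w. x w + y w) = (\<lambda>u. insert_coev m r s x u + insert_coev m r s y u)"
    for x y :: "nat list \<Rightarrow> 'k"
    by (simp add: insert_coev_def fun_eq_iff)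
  show "insert_coev m r s (\<lambda>w. c * x w) = (\<lambda>u. c * insert_coev m r s x u)"
    for c and x :: "nat list \<Rightarrow> 'k"
    by (simp add: insert_coev_def fun_eq_iff)
qed (rule insert_coev_in_tcarrier insert_coev_dp_act insert_coev_cartan_act; assumption)+

theorem proposition6p2:
  fixes m r s :: nat
  assumes "m > 0"
    and "\<not> semisimple_T TYPE('k::field) m r s"
  shows "\<not> semisimple_T TYPE('k) m (r + 1) (s + 1)"
  using tensor_embedding.semisimple_source[OF tensor_embedding_insert_coev[OF assms(1)]] assms(2)
  by blast

end
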